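(* Consider the Accelerated Preference Optimization (APO) procedure described in the context, run with an arbitrary loss function $\ell$, learning rate $\beta>0$ and extrapolation parameter $\alpha>0$, $\alpha\neq 1$. Suppose that for each iteration $t\in\{0,\dots,T\}$ the normalized extrapolated policy $\pi_{t+1}$, i.e. the normalization of $\hat{\pi}_{t+1}(y|x)\cdot\big(\hat{\pi}_{t+1}(y|x)/\hat{\pi}_{t}(y|x)\big)^{\alpha}$, belongs to the policy class $\Pi$. Then for every $t\in\{0,\dots,T\}$, every $x\in\mathcal{X}$ and $y\in\mathcal{Y}$, $$\hat{\pi}_{t+1}(y|x)=\frac{1}{Z_t(x)}\,\pi_{\mathrm{ref}}(y|x)\,\exp\Bigg(\frac{1}{\beta}\sum_{i=0}^{t}\Big(\frac{1}{1-\alpha}-\frac{\alpha^{t+1-i}}{1-\alpha}\Big)\, r_i(x,y)\Bigg),$$ where $r_i(x,y)=\beta\log\hat{\pi}_{i+1}(y|x)-\beta\log\pi_i(y|x)$ is the reparameterized reward at iteration $i$, and $Z_t(x)=\sum_{y}\pi_{\mathrm{ref}}(y|x)\exp\big(\sum_{i=0}^{t}(1/(1-\alpha)-\alpha^{t+1-i}/(1-\alpha))\, r_i(x,y)/\beta\big)$ is the normalizing constant.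
   Context: Let $\mathcal{X}$ (prompts) and $\mathcal{Y}$ (responses) be finite sets and $\rho$ a distribution on $\mathcal{X}$. A policy is a map $\pi:\mathcal{X}\to\Delta(\mathcal{Y})$; $\Pi$ is a class of policies with full support (so all logarithms below are defined). The APO procedure takes a reference policy $\pi_{\mathrm{ref}}\in\Pi$, $\beta>0$, an extrapolation parameter $\alpha$, a number of iterations $T$, a sample size $N$ and a loss $\ell(r,x,y^w,y^l,\pi_t)\in\mathbb{R}$. Initialize $\pi_0=\hat{\pi}_0=\pi_{\mathrm{ref}}$. For $t=0,1,\dots,T$: collect a dataset $\mathcal{D}_t$ of $N$ triples $(x,y^w,y^l)$ with $x\sim\rho$, two responses drawn from $\pi_t(\cdot|x)$, and $y^w,y^l$ the preferred and dispreferred of the two; for $\pi\in\Pi$ set $r_\pi(x,y)=\beta\log\frac{\pi(y|x)}{\pi_t(y|x)}$; set $\hat{\pi}_{t+1}\in\arg\min_{\pi\in\Pi}\frac1N\sum_{(x,y^w,y^l)\in\mathcal{D}_t}\ell(r_\pi,x,y^w,y^l,\pi_t)$; then set $\pi_{t+1}(y|x)=\frac{1}{Z'_t(x)}\hat{\pi}_{t+1}(y|x)\big(\hat{\pi}_{t+1}(y|x)/\hat{\pi}_{t}(y|x)\big)^{\alpha}$ with $Z'_t(x)$ the normalizing constant. The output is $\hat{\pi}_{T+1}$. *)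

theory Defs
  imports Complex_Main
begin

text \<open>Prompts 'x and responses 'y are finite types. A policy is represented by its
  conditional probability table pi x y = pi(y|x).\<close>

type_synonym ('x, 'y) policy = "'x \<Rightarrow> 'y \<Rightarrow> real"

definition is_policy :: "('x::finite, 'y::finite) policy \<Rightarrow> bool" where
  "is_policy p \<longleftrightarrow> (\<forall>x. (\<forall>y. 0 \<le> p x y) \<and> (\<Sum>y\<in>UNIV. p x y) = 1)"

definition full_support :: "('x::finite, 'y::finite) policy \<Rightarrow> bool" where
  "full_support p \<longleftrightarrow> is_policy p \<and> (\<forall>x y. 0 < p x y)"

definition reparam_reward :: "real \<Rightarrow> ('x, 'y) policy \<Rightarrow> ('x, 'y) policy \<Rightarrow> 'x \<Rightarrow> 'y \<Rightarrow> real" where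
  "reparam_reward \<beta> p pt x y = \<beta> * ln (p x y / pt x y)"

definition emp_loss ::
  "((('x, 'y) policy) \<Rightarrow> 'x \<Rightarrow> 'y \<Rightarrow> 'y \<Rightarrow> ('x, 'y) policy \<Rightarrow> real)
   \<Rightarrow> real \<Rightarrow> ('x, 'y) policy \<Rightarrow> ('x \<times> 'y \<times> 'y) list \<Rightarrow> ('x, 'y) policy \<Rightarrow> real" where
  "emp_loss l \<beta> pt D p =
     (\<Sum>(x, yw, yl)\<leftarrow>D. l (reparam_reward \<beta> p pt) x yw yl pt) / real (length D)"

definition extrapolate :: "real \<Rightarrow> ('x, 'y::finite) policy \<Rightarrow> ('x, 'y) policy \<Rightarrow> ('x, 'y) policy" where
  "extrapolate \<alpha> pnew pold x y =
     pnew x y * (pnew x y / pold x y) powr \<alpha> /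
     (\<Sum>y'\<in>UNIV. pnew x y' * (pnew x y' / pold x y') powr \<alpha>)"

definition APO_run ::
  "('x::finite, 'y::finite) policy set \<Rightarrow> ('x, 'y) policy \<Rightarrow> real \<Rightarrow> real \<Rightarrow> nat \<Rightarrow> nat
   \<Rightarrow> ((('x, 'y) policy) \<Rightarrow> 'x \<Rightarrow> 'y \<Rightarrow> 'y \<Rightarrow> ('x, 'y) policy \<Rightarrow> real)
   \<Rightarrow> (nat \<Rightarrow> ('x \<times> 'y \<times> 'y) list)
   \<Rightarrow> (nat \<Rightarrow> ('x, 'y) policy) \<Rightarrow> (nat \<Rightarrow> ('x, 'y) policy) \<Rightarrow> bool" where
  "APO_run \<Pi> pref \<beta> \<alpha> T N l D pol pihat \<longleftrightarrow>
     pol 0 = pref \<and> pihat 0 = pref \<and>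
     (\<forall>t\<le>T.
        length (D t) = N \<and>
        pihat (Suc t) \<in> \<Pi> \<and>
        (\<forall>p\<in>\<Pi>. emp_loss l \<beta> (pol t) (D t) (pihat (Suc t)) \<le> emp_loss l \<beta> (pol t) (D t) p) \<and>
        pol (Suc t) = extrapolate \<alpha> (pihat (Suc t)) (pihat t))"

end

theory Submission
  imports Defs
begin

text \<open>Fix a prompt x, write L_i = ln hat_pi_i(.|x) and d_j = ln hat_pi_{j+1}(.|x) - ln pi_j(.|x),
  and read identities between functions of y modulo additive constants. The normaliser of the
  extrapolation step is such a constant, so ln pi_{s+1} = (1 + alpha) L_{s+1} - alpha L_s, and
  the increments D_s = L_{s+1} - L_s satisfy D_0 = d_0 and D_{s+1} = d_{s+1} + alpha D_s.
  Hence D_s = sum_{j<=s} alpha^(s-j) d_j, and summing the geometric weights,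
  L_{t+1} - L_0 = sum_{j<=t} (1 - alpha^(t+1-j)) / (1 - alpha) d_j. As hat_pi_{t+1}(.|x) is a
  probability vector, the remaining constant is the log-normaliser.\<close>

definition differ_by_const :: "('y \<Rightarrow> real) \<Rightarrow> ('y \<Rightarrow> real) \<Rightarrow> bool" where
  "differ_by_const f g \<longleftrightarrow> (\<exists>c. \<forall>y. f y = g y + c)"

lemma differ_by_const_refl: "differ_by_const f f"
  unfolding differ_by_const_def by (intro exI[of _ 0]) simp

lemma differ_by_const_trans [trans]:
  "differ_by_const f g \<Longrightarrow> differ_by_const g h \<Longrightarrow> differ_by_const f h"
  unfolding differ_by_const_def by (metis add.assoc)

lemma differ_by_const_add:
  assumes "differ_by_const f g" "differ_by_const f' g'"
  shows "differ_by_const (\<lambda>y. f y + f' y) (\<lambda>y. g y + g' y)"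
proof -
  obtain c c' where "\<forall>y. f y = g y + c" "\<forall>y. f' y = g' y + c'"
    using assms unfolding differ_by_const_def by blast
  then show ?thesis
    unfolding differ_by_const_def by (intro exI[of _ "c + c'"]) simp
qed

lemma differ_by_const_scale:
  assumes "differ_by_const f g"
  shows "differ_by_const (\<lambda>y. a * f y) (\<lambda>y. a * g y)"
proof -
  obtain c where "\<forall>y. f y = g y + c"
    using assms unfolding differ_by_const_def by blast
  then show ?thesis
    unfolding differ_by_const_def by (intro exI[of _ "a * c"]) (simp add: algebra_simps)
qed

lemma differ_by_const_sum:
  assumes "\<forall>i\<in>I. differ_by_const (f i) (g i)"
  shows "differ_by_const (\<lambda>y. \<Sum>i\<in>I. f i y) (\<lambda>y. \<Sum>i\<in>I. g i y)"
proof -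
  obtain c where "\<forall>i\<in>I. \<forall>y. f i y = g i y + c i"
    using assms unfolding differ_by_const_def by metis
  then show ?thesis
    unfolding differ_by_const_def by (intro exI[of _ "sum c I"]) (simp add: sum.distrib)
qed

lemma differ_by_const_linear_recurrence:
  fixes \<alpha> :: real
  assumes "differ_by_const (u 0) (d 0)"
    and "\<forall>s<t. differ_by_const (u (Suc s)) (\<lambda>y. d (Suc s) y + \<alpha> * u s y)"
  shows "differ_by_const (u t) (\<lambda>y. \<Sum>j\<in>{0..t}. \<alpha> ^ (t - j) * d j y)"
  using assms(2)
proof (induction t)
  case 0
  then show ?case using assms(1) by simp
next
  case (Suc t)
  have unfold: "(\<lambda>y. \<Sum>j\<in>{0..Suc t}. \<alpha> ^ (Suc t - j) * d j y)
      = (\<lambda>y. d (Suc t) y + \<alpha> * (\<Sum>j\<in>{0..t}. \<alpha> ^ (t - j) * d j y))"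
    by (simp add: sum_distrib_left Suc_diff_le mult.assoc add.commute[of _ "d (Suc t) _"])
  have "differ_by_const (u (Suc t)) (\<lambda>y. d (Suc t) y + \<alpha> * u t y)"
    using Suc.prems by simp
  also have "differ_by_const (\<lambda>y. d (Suc t) y + \<alpha> * u t y)
      (\<lambda>y. d (Suc t) y + \<alpha> * (\<Sum>j\<in>{0..t}. \<alpha> ^ (t - j) * d j y))"
    using Suc by (intro differ_by_const_add differ_by_const_refl differ_by_const_scale) simp
  finally show ?case
    unfolding unfold .
qed

lemma sum_discounted_partial_sums:
  fixes \<alpha> :: real
  assumes "\<alpha> \<noteq> 1"
  shows "(\<Sum>s\<in>{0..t}. \<Sum>j\<in>{0..s}. \<alpha> ^ (s - j) * d j)
       = (\<Sum>j\<in>{0..t}. (1 / (1 - \<alpha>) - \<alpha> ^ (t + 1 - j) / (1 - \<alpha>)) * d j)"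
proof (induction t)
  case 0
  then show ?case using assms by (simp add: field_simps)
next
  case (Suc t)
  have "(1 / (1 - \<alpha>) - \<alpha> ^ (Suc t + 1 - j) / (1 - \<alpha>)) * d j
      = (1 / (1 - \<alpha>) - \<alpha> ^ (t + 1 - j) / (1 - \<alpha>)) * d j + \<alpha> ^ (Suc t - j) * d j"
    if "j \<le> t" for j
    using that assms by (simp add: Suc_diff_le field_simps)
  then have "(\<Sum>j\<in>{0..t}. (1 / (1 - \<alpha>) - \<alpha> ^ (Suc t + 1 - j) / (1 - \<alpha>)) * d j)
      = (\<Sum>j\<in>{0..t}. (1 / (1 - \<alpha>) - \<alpha> ^ (t + 1 - j) / (1 - \<alpha>)) * d j)
        + (\<Sum>j\<in>{0..t}. \<alpha> ^ (Suc t - j) * d j)"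
    by (simp add: sum.distrib[symmetric])
  moreover have "1 / (1 - \<alpha>) - \<alpha> / (1 - \<alpha>) = 1"
    using assms by (simp add: field_simps)
  ultimately show ?case
    using Suc.IH by simp
qed

lemma ln_extrapolate:
  assumes "\<forall>y. 0 < pnew x y" "\<forall>y. 0 < pold x y"
  shows "differ_by_const (\<lambda>y. ln (extrapolate \<alpha> pnew pold x y))
           (\<lambda>y. (1 + \<alpha>) * ln (pnew x y) - \<alpha> * ln (pold x y))"
proof -
  define Z where "Z = (\<Sum>y'\<in>UNIV. pnew x y' * (pnew x y' / pold x y') powr \<alpha>)"
  have "0 < pnew x y / pold x y" for y
    using assms by simp
  then have "0 < pnew x y * (pnew x y / pold x y) powr \<alpha>" for y
    using assms by (simp add: less_imp_neq[symmetric, of 0])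
  then have "0 < Z"
    unfolding Z_def by (simp add: sum_pos)
  have "ln (extrapolate \<alpha> pnew pold x y)
      = (1 + \<alpha>) * ln (pnew x y) - \<alpha> * ln (pold x y) + - ln Z" for y
  proof -
    have "0 < pnew x y" "0 < pold x y"
      using assms by auto
    moreover have "extrapolate \<alpha> pnew pold x y = pnew x y * (pnew x y / pold x y) powr \<alpha> / Z"
      unfolding extrapolate_def Z_def ..
    ultimately show ?thesis
      using \<open>0 < Z\<close> by (simp add: ln_mult ln_div algebra_simps)
  qed
  then show ?thesis
    unfolding differ_by_const_def by blast
qed

lemma normalized_exp_if_ln_differ_by_const:
  fixes p q g :: "'y::finite \<Rightarrow> real"
  assumes "\<forall>y. 0 < p y" "(\<Sum>y\<in>UNIV. p y) = 1" "\<forall>y. 0 < q y"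
    and "differ_by_const (\<lambda>y. ln (p y)) (\<lambda>y. ln (q y) + g y)"
  shows "p y = q y * exp (g y) / (\<Sum>y'\<in>UNIV. q y' * exp (g y'))"
proof -
  obtain c where "\<forall>y. ln (p y) = ln (q y) + g y + c"
    using assms(4) unfolding differ_by_const_def by blast
  then have p: "p y = exp c * (q y * exp (g y))" for y
    using assms(1,3) by (metis exp_add exp_ln mult.commute)
  then have "exp c * (\<Sum>y'\<in>UNIV. q y' * exp (g y')) = 1"
    using assms(2) by (simp add: sum_distrib_left)
  then have "exp c = 1 / (\<Sum>y'\<in>UNIV. q y' * exp (g y'))"
    by (metis mult_eq_0_iff nonzero_eq_divide_eq zero_neq_one)
  then show ?thesis
    using p by simp
qed

lemma ln_fitted_policy_differ_by_const:
  fixes pol pihat :: "nat \<Rightarrow> ('x, 'y::finite) policy" and \<alpha> :: real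
  assumes "\<alpha> \<noteq> 1" "pol 0 = pihat 0"
    and extrapolated: "\<forall>s<t. pol (Suc s) = extrapolate \<alpha> (pihat (Suc s)) (pihat s)"
    and pos: "\<forall>i\<le>t. \<forall>y. 0 < pihat i x y"
  shows "differ_by_const (\<lambda>y. ln (pihat (Suc t) x y))
           (\<lambda>y. ln (pihat 0 x y) + (\<Sum>j\<in>{0..t}. (1 / (1 - \<alpha>) - \<alpha> ^ (t + 1 - j) / (1 - \<alpha>)) *
              (ln (pihat (Suc j) x y) - ln (pol j x y))))"
proof -
  define L where "L i y = ln (pihat i x y)" for i y
  define d where "d j y = L (Suc j) y - ln (pol j x y)" for j y
  define inc where "inc s y = L (Suc s) y - L s y" for s y
  have "differ_by_const (inc (Suc s)) (\<lambda>y. d (Suc s) y + \<alpha> * inc s y)" if "s < t" for s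
  proof -
    obtain c where "\<forall>y. ln (pol (Suc s) x y) = (1 + \<alpha>) * L (Suc s) y - \<alpha> * L s y + c"
      using ln_extrapolate[of "pihat (Suc s)" x "pihat s" \<alpha>] extrapolated pos \<open>s < t\<close>
      unfolding differ_by_const_def L_def by auto
    then show ?thesis
      unfolding differ_by_const_def inc_def d_def by (intro exI[of _ c]) (simp add: algebra_simps)
  qed
  moreover have "inc 0 = d 0"
    unfolding inc_def d_def L_def using assms(2) by simp
  ultimately have "differ_by_const (inc s) (\<lambda>y. \<Sum>j\<in>{0..s}. \<alpha> ^ (s - j) * d j y)" if "s \<le> t" for s
    using that differ_by_const_refl by (intro differ_by_const_linear_recurrence) auto
  then have "differ_by_const (\<lambda>y. L 0 y + (\<Sum>s\<in>{0..t}. inc s y))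
      (\<lambda>y. L 0 y + (\<Sum>s\<in>{0..t}. \<Sum>j\<in>{0..s}. \<alpha> ^ (s - j) * d j y))"
    by (intro differ_by_const_add differ_by_const_refl differ_by_const_sum) simp
  moreover have "L 0 y + (\<Sum>s\<in>{0..t}. inc s y) = L (Suc t) y" for y
    unfolding inc_def using sum_Suc_diff[of 0 t "\<lambda>i. L i y"] by simp
  ultimately show ?thesis
    unfolding sum_discounted_partial_sums[OF assms(1)] by (simp add: L_def d_def)
qed

theorem theorem1:
  fixes \<Pi> :: "('x::finite, 'y::finite) policy set"
    and pref :: "('x, 'y) policy"
    and \<beta> \<alpha> :: real and T N :: nat
    and l :: "(('x, 'y) policy) \<Rightarrow> 'x \<Rightarrow> 'y \<Rightarrow> 'y \<Rightarrow> ('x, 'y) policy \<Rightarrow> real"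
    and D :: "nat \<Rightarrow> ('x \<times> 'y \<times> 'y) list"
    and pol pihat :: "nat \<Rightarrow> ('x, 'y) policy"
  assumes full: "\<forall>p\<in>\<Pi>. full_support p"
    and ref: "pref \<in> \<Pi>"
    and beta: "\<beta> > 0"
    and alpha: "\<alpha> > 0" "\<alpha> \<noteq> 1"
    and N: "N > 0"
    and run: "APO_run \<Pi> pref \<beta> \<alpha> T N l D pol pihat"
    and closed: "\<forall>t\<le>T. pol (Suc t) \<in> \<Pi>"
  shows "\<forall>t\<le>T. \<forall>x y.
     pihat (Suc t) x y =
       pref x y * exp ((1 / \<beta>) * (\<Sum>i\<in>{0..t}.
           (1 / (1 - \<alpha>) - \<alpha> ^ (t + 1 - i) / (1 - \<alpha>)) *
           (\<beta> * ln (pihat (Suc i) x y) - \<beta> * ln (pol i x y))))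
       / (\<Sum>y'\<in>UNIV. pref x y' * exp ((\<Sum>i\<in>{0..t}.
           (1 / (1 - \<alpha>) - \<alpha> ^ (t + 1 - i) / (1 - \<alpha>)) *
           (\<beta> * ln (pihat (Suc i) x y') - \<beta> * ln (pol i x y'))) / \<beta>))"
proof -
  from run have start: "pol 0 = pref" "pihat 0 = pref"
    and step: "\<forall>s\<le>T. pihat (Suc s) \<in> \<Pi> \<and> pol (Suc s) = extrapolate \<alpha> (pihat (Suc s)) (pihat s)"
    unfolding APO_run_def by auto
  have fitted: "full_support (pihat i)" if "i \<le> Suc T" for i
    using that full ref start step by (cases i) auto
  define A where "A t x y = (\<Sum>i\<in>{0..t}. (1 / (1 - \<alpha>) - \<alpha> ^ (t + 1 - i) / (1 - \<alpha>)) *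
    (ln (pihat (Suc i) x y) - ln (pol i x y)))" for t x y
  have closed_form: "pihat (Suc t) x y = pref x y * exp (A t x y) / (\<Sum>y'\<in>UNIV. pref x y' * exp (A t x y'))"
    if "t \<le> T" for t x y
  proof -
    have "differ_by_const (\<lambda>y. ln (pihat (Suc t) x y)) (\<lambda>y. ln (pref x y) + A t x y)"
      using ln_fitted_policy_differ_by_const[of \<alpha> pol pihat t x] alpha(2) start step fitted that
      unfolding A_def by (simp add: full_support_def)
    then show ?thesis
      using fitted[of "Suc t"] full ref that
      by (intro normalized_exp_if_ln_differ_by_const) (auto simp: full_support_def is_policy_def)
  qed
  have "(\<Sum>i\<in>{0..t}. (1 / (1 - \<alpha>) - \<alpha> ^ (t + 1 - i) / (1 - \<alpha>)) *
      (\<beta> * ln (pihat (Suc i) x y) - \<beta> * ln (pol i x y))) = \<beta> * A t x y" for t x y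
    unfolding A_def by (simp add: sum_distrib_left right_diff_distrib[symmetric] mult.left_commute)
  then have unscaled: "(1 / \<beta>) * (\<Sum>i\<in>{0..t}. (1 / (1 - \<alpha>) - \<alpha> ^ (t + 1 - i) / (1 - \<alpha>)) *
      (\<beta> * ln (pihat (Suc i) x y) - \<beta> * ln (pol i x y))) = A t x y"
    "(\<Sum>i\<in>{0..t}. (1 / (1 - \<alpha>) - \<alpha> ^ (t + 1 - i) / (1 - \<alpha>)) *
      (\<beta> * ln (pihat (Suc i) x y) - \<beta> * ln (pol i x y))) / \<beta> = A t x y" for t x y
    using beta by simp_all
  show ?thesis
    unfolding unscaled using closed_form by blast
qed

end
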